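(* Suppose Assumptions 1, 2, 3 and 4 below hold (with all expectations involved finite). Let $\alpha=\big(P(D_{11}=1)-P(D_{10}=1)\big)/DID_D$, let $S'=\{D(0)\neq D(1),\,G=0\}$ and $\Delta'=E\big(Y(1)-Y(0)\mid S',T=1\big)$ (with the convention that $(1-\alpha)\Delta'=0$ when $P(S')=0$, in which case $\alpha=1$). Then 1. $W_{DID}=\alpha\Delta+(1-\alpha)\Delta'$. 2. If in addition either $\Delta=\Delta'$, or Assumption 5 holds, then $W_{DID}=\Delta$.
   Context: Standing framework. Let $(Y(0),Y(1),V,G,T)$ be random variables on a common probability space, with $G\in\{0,1\}$ (group; $G=1$ is the "treatment group"), $T\in\{0,1\}$ (period), $V$ real-valued, and let $(v_{gt})_{(g,t)\in\{0,1\}^2}$ be real constants. The treatment is $D=1\{V\geq v_{GT}\}$ and the potential treatments are $D(t)=1\{V\geq v_{Gt}\}$, $t\in\{0,1\}$, so that $D=D(T)$. The observed outcome is $Y=DY(1)+(1-D)Y(0)$. For any random variable $R$, $R_{gt}$ denotes a random variable distributed as $R$ conditional on $\{G=g,T=t\}$ and $R_{dgt}$ one distributed as $R$ conditional on $\{D=d,G=g,T=t\}$; e.g. $Y_{gt}(d)$ is distributed as $Y(d)$ given $G=g,T=t$. $F_R$ is the cdf of $R$, $F_{R\mid A}$ its cdf conditional on $A$, and for a nondecreasing $F$, $F^{-1}(q)=\inf\{x\in\mathbb{R}:F(x)\geq q\}$. Let $S=\{D(0)<D(1),\,G=1\}$ (treatment-group switchers) and $\Delta=E(Y(1)-Y(0)\mid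 S,T=1)$. Assumption 1: $D=1\{V\geq v_{GT}\}$ with $V$ independent of $T$ conditional on $G$. Assumption 2: $E(D_{11})>E(D_{10})$ and $E(D_{11})-E(D_{10})>E(D_{01})-E(D_{00})$. Assumption 3 (common trends): $E(Y(0)\mid G,T=1)-E(Y(0)\mid G,T=0)$ does not depend on $G$. Assumption 4: $E(Y(1)-Y(0)\mid G,T=1,D(0)=1)=E(Y(1)-Y(0)\mid G,T=0,D(0)=1)$. Assumption 5: $0<E(D_{01})=E(D_{00})<1$. For any random variable $R$, $DID_R=E(R_{11})-E(R_{10})-\big(E(R_{01})-E(R_{00})\big)$, and $W_{DID}=DID_Y/DID_D$. *)

theory Defs
  imports "HOL-Probability.Probability"
begin

text \<open>Groups and periods are encoded as booleans: True = 1, False = 0.\<close>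

definition ev :: "'a measure \<Rightarrow> ('a \<Rightarrow> bool) \<Rightarrow> 'a set" where
  "ev M P = {x \<in> space M. P x}"

text \<open>Elementary conditional expectation of X given the event A,
  E(X | A) = E(X 1_A) / P(A) (equal to 0 by the convention x/0 = 0 when P(A) = 0).\<close>
definition cexp :: "'a measure \<Rightarrow> ('a \<Rightarrow> real) \<Rightarrow> 'a set \<Rightarrow> real" where
  "cexp M X A = (LINT x:A|M. X x) / measure M A"

definition cprob :: "'a measure \<Rightarrow> 'a set \<Rightarrow> 'a set \<Rightarrow> real" where
  "cprob M A B = measure M (A \<inter> B) / measure M B"

definition Dtr :: "(bool \<Rightarrow> bool \<Rightarrow> real) \<Rightarrow> ('a \<Rightarrow> bool) \<Rightarrow> ('a \<Rightarrow> bool) \<Rightarrow> ('a \<Rightarrow> real) \<Rightarrow> 'a \<Rightarrow> real" where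
  "Dtr v G T V x = (if V x \<ge> v (G x) (T x) then 1 else 0)"

definition Dpot :: "(bool \<Rightarrow> bool \<Rightarrow> real) \<Rightarrow> ('a \<Rightarrow> bool) \<Rightarrow> ('a \<Rightarrow> real) \<Rightarrow> bool \<Rightarrow> 'a \<Rightarrow> real" where
  "Dpot v G V t x = (if V x \<ge> v (G x) t then 1 else 0)"

definition Yobs :: "(bool \<Rightarrow> bool \<Rightarrow> real) \<Rightarrow> ('a \<Rightarrow> bool) \<Rightarrow> ('a \<Rightarrow> bool) \<Rightarrow> ('a \<Rightarrow> real)
    \<Rightarrow> ('a \<Rightarrow> real) \<Rightarrow> ('a \<Rightarrow> real) \<Rightarrow> 'a \<Rightarrow> real" where
  "Yobs v G T V Y0 Y1 x = Dtr v G T V x * Y1 x + (1 - Dtr v G T V x) * Y0 x"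

definition Egt :: "'a measure \<Rightarrow> ('a \<Rightarrow> bool) \<Rightarrow> ('a \<Rightarrow> bool) \<Rightarrow> ('a \<Rightarrow> real) \<Rightarrow> bool \<Rightarrow> bool \<Rightarrow> real" where
  "Egt M G T R g t = cexp M R (ev M (\<lambda>x. G x = g \<and> T x = t))"

definition DID :: "'a measure \<Rightarrow> ('a \<Rightarrow> bool) \<Rightarrow> ('a \<Rightarrow> bool) \<Rightarrow> ('a \<Rightarrow> real) \<Rightarrow> real" where
  "DID M G T R = Egt M G T R True True - Egt M G T R True False
                 - (Egt M G T R False True - Egt M G T R False False)"

end

theory Submission
  imports Defs
begin

text \<open>In cell \<open>(g, t)\<close> the treated units are those with \<open>V \<ge> v g t\<close>, so \<open>E(D_gt)\<close> and
  \<open>E(Y_gt) - E(Y(0)_gt)\<close> are the mass of that upper set and the integral of \<open>Y(1) - Y(0)\<close> over it,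
  divided by the probability of the cell. Assumption 1 makes the conditional law of \<open>V\<close> in group \<open>g\<close>
  the same in both periods, and Assumption 4 does the same for the mean effect on the upper set of
  the period-0 threshold. Hence the change of group \<open>g\<close> between the periods only involves its
  switchers, the band between \<open>v g 0\<close> and \<open>v g 1\<close>, counted with the sign of \<open>v g 0 - v g 1\<close>:
  \<open>E(Y_g1) - E(Y_g0) = E(Y(0)_g1) - E(Y(0)_g0) + \<Delta>\<^sub>g (E(D_g1) - E(D_g0))\<close>.
  Common trends cancels the \<open>Y(0)\<close> terms, so \<open>DID_Y = \<Delta> a - \<Delta>' b\<close> with \<open>DID_D = a - b\<close>, where
  \<open>a\<close> and \<open>b\<close> are the treatment changes of the two groups. Assumption 2 forces \<open>v 1 1 \<le> v 1 0\<close>,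
  so the switchers of group 1 are exactly \<open>S\<close>; Assumption 5 says \<open>b = 0\<close>.\<close>

lemma set_integral_eq_cexp_mult:
  fixes f :: "'a \<Rightarrow> real"
  assumes "finite_measure M" and f: "integrable M f" and A: "A \<in> sets M"
  shows "(LINT x:A|M. f x) = cexp M f A * measure M A"
proof (cases "measure M A = 0")
  case True
  then have "A \<in> null_sets M"
    using A assms(1) by (simp add: null_sets_def finite_measure.emeasure_eq_measure)
  then have "(LINT x:A|M. f x) = (LINT x:{}|M. f x)"
    by (intro set_integral_null_delta) (use f A in auto)
  then show ?thesis using True by (simp add: set_lebesgue_integral_def)
qed (simp add: cexp_def)

locale fuzzy_did = prob_space M for M :: "'a measure" +
  fixes Y0 Y1 V :: "'a \<Rightarrow> real" and G T :: "'a \<Rightarrow> bool" and v :: "bool \<Rightarrow> bool \<Rightarrow> real"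
  assumes measurable_G: "G \<in> measurable M (count_space UNIV)"
    and measurable_T: "T \<in> measurable M (count_space UNIV)"
    and measurable_V: "V \<in> borel_measurable M"
    and integrable_Y0: "integrable M Y0"
    and integrable_Y1: "integrable M Y1"
    and cell_pos: "\<And>g t. measure M (ev M (\<lambda>x. G x = g \<and> T x = t)) > 0"
    and V_indep_T_given_G: "\<And>g t B. B \<in> sets borel \<Longrightarrow>
        measure M (ev M (\<lambda>x. V x \<in> B \<and> T x = t \<and> G x = g)) * measure M (ev M (\<lambda>x. G x = g))
        = measure M (ev M (\<lambda>x. V x \<in> B \<and> G x = g)) * measure M (ev M (\<lambda>x. T x = t \<and> G x = g))"
begin

declare measurable_G [measurable] measurable_T [measurable] measurable_V [measurable]

abbreviation effect :: "'a \<Rightarrow> real" where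
  "effect x \<equiv> Y1 x - Y0 x"

definition cell :: "bool \<Rightarrow> bool \<Rightarrow> 'a set" where
  "cell g t = ev M (\<lambda>x. G x = g \<and> T x = t)"

definition upper :: "bool \<Rightarrow> bool \<Rightarrow> real \<Rightarrow> 'a set" where
  "upper g t c = ev M (\<lambda>x. G x = g \<and> T x = t \<and> c \<le> V x)"

text \<open>For \<open>a = v g False\<close> and \<open>b = v g True\<close> these are the switchers \<open>D(0) \<noteq> D(1)\<close> of the cell.\<close>
definition crossing :: "bool \<Rightarrow> bool \<Rightarrow> real \<Rightarrow> real \<Rightarrow> 'a set" where
  "crossing g t a b = ev M (\<lambda>x. G x = g \<and> T x = t \<and> (a \<le> V x) \<noteq> (b \<le> V x))"

lemma sets_cell [measurable]: "cell g t \<in> sets M"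
  unfolding cell_def ev_def by measurable

lemma sets_upper [measurable]: "upper g t c \<in> sets M"
  unfolding upper_def ev_def by measurable

lemma crossing_eq_Diff_Un: "crossing g t a b = (upper g t a - upper g t b) \<union> (upper g t b - upper g t a)"
  unfolding crossing_def upper_def ev_def by auto

lemma sets_crossing [measurable]: "crossing g t a b \<in> sets M"
  unfolding crossing_eq_Diff_Un by (intro sets.Un sets.Diff sets_upper)

lemma integrable_effect: "integrable M effect"
  using integrable_Y0 integrable_Y1 by simp

lemma measure_cell_pos: "measure M (cell g t) > 0"
  using cell_pos by (simp add: cell_def)

lemma crossing_commute: "crossing g t a b = crossing g t b a"
  unfolding crossing_def ev_def by blast

lemma upper_eq_Un_crossing:
  assumes "b \<le> a"
  shows "upper g t b = upper g t a \<union> crossing g t a b"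
    and "upper g t a \<inter> crossing g t a b = {}"
  using assms unfolding upper_def crossing_def ev_def by auto

lemma set_integral_upper_shift:
  fixes f :: "'a \<Rightarrow> real"
  assumes f: "integrable M f"
  shows "(LINT x:upper g t b|M. f x)
    = (LINT x:upper g t a|M. f x) + (if b \<le> a then 1 else -1) * (LINT x:crossing g t a b|M. f x)"
proof -
  have set_int: "set_integrable M A f" if "A \<in> sets M" for A
    unfolding set_integrable_def by (rule integrable_mult_indicator[OF that f])
  have split: "(LINT x:upper g t d|M. f x) = (LINT x:upper g t c|M. f x) + (LINT x:crossing g t c d|M. f x)"
    if "d \<le> c" for c d
    unfolding upper_eq_Un_crossing(1)[OF that]
    by (intro set_integral_Un upper_eq_Un_crossing(2)[OF that] set_int) measurable
  show ?thesis
    using split[of b a] split[of a b] by (simp add: crossing_commute[of g t b a])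
qed

lemma measure_upper_shift:
  "measure M (upper g t b)
    = measure M (upper g t a) + (if b \<le> a then 1 else -1) * measure M (crossing g t a b)"
  using set_integral_upper_shift[of "\<lambda>_. 1" g t b a] by (simp add: set_integral_const)

lemma measure_upper_time_invariant:
  "measure M (upper g False c) / measure M (cell g False) = measure M (upper g True c) / measure M (cell g True)"
proof -
  define group where "group = ev M (\<lambda>x. G x = g)"
  define group_upper where "group_upper = ev M (\<lambda>x. V x \<in> {c..} \<and> G x = g)"
  have indep: "measure M (upper g t c) * measure M group = measure M group_upper * measure M (cell g t)" for t
  proof -
    have "ev M (\<lambda>x. V x \<in> {c..} \<and> T x = t \<and> G x = g) = upper g t c"
      and "ev M (\<lambda>x. T x = t \<and> G x = g) = cell g t"
      by (auto simp: upper_def cell_def ev_def)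
    then show ?thesis
      using V_indep_T_given_G[of "{c..}" t g] by (simp add: group_def group_upper_def)
  qed
  have "cell g True \<subseteq> group" by (auto simp: cell_def group_def ev_def)
  then have "measure M (cell g True) \<le> measure M group"
    by (intro finite_measure_mono) (auto simp: group_def ev_def)
  then have "measure M group > 0" using measure_cell_pos[of g True] by linarith
  then have "measure M (upper g t c) / measure M (cell g t) = measure M group_upper / measure M group" for t
    using indep[of t] measure_cell_pos[of g t] by (simp add: field_simps)
  then show ?thesis by simp
qed

lemma set_integral_upper_time_invariant:
  fixes f :: "'a \<Rightarrow> real"
  assumes f: "integrable M f" and same_mean: "cexp M f (upper g True c) = cexp M f (upper g False c)"
  shows "(LINT x:upper g False c|M. f x) / measure M (cell g False)
    = (LINT x:upper g True c|M. f x) / measure M (cell g True)"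
proof -
  have integral_upper: "(LINT x:upper g t c|M. f x) / measure M (cell g t)
      = cexp M f (upper g t c) * (measure M (upper g t c) / measure M (cell g t))" for t
    by (simp add: set_integral_eq_cexp_mult[OF finite_measure_axioms f])
  show ?thesis
    unfolding integral_upper measure_upper_time_invariant same_mean ..
qed

lemma indicator_cell_mult_Dtr:
  "indicator (cell g t) x * Dtr v G T V x = indicator (upper g t (v g t)) x"
  by (cases "x \<in> cell g t") (auto simp: cell_def upper_def ev_def Dtr_def indicator_def)

lemma indicator_cell_mult_Yobs:
  "indicator (cell g t) x * Yobs v G T V Y0 Y1 x
    = indicator (cell g t) x * Y0 x + indicator (upper g t (v g t)) x * effect x"
  by (cases "x \<in> cell g t") (auto simp: cell_def upper_def ev_def Dtr_def Yobs_def indicator_def)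

lemma Egt_treatment:
  "Egt M G T (Dtr v G T V) g t = measure M (upper g t (v g t)) / measure M (cell g t)"
  by (simp add: Egt_def cexp_def cell_def[symmetric] set_lebesgue_integral_def indicator_cell_mult_Dtr)

lemma Egt_outcome:
  "Egt M G T (Yobs v G T V Y0 Y1) g t
    = Egt M G T Y0 g t + (LINT x:upper g t (v g t)|M. effect x) / measure M (cell g t)"
proof -
  have "(LINT x:cell g t|M. Yobs v G T V Y0 Y1 x) = (LINT x:cell g t|M. Y0 x) + (LINT x:upper g t (v g t)|M. effect x)"
    unfolding set_lebesgue_integral_def
    using integrable_mult_indicator[OF sets_cell integrable_Y0]
      integrable_mult_indicator[OF sets_upper integrable_effect]
    by (simp add: indicator_cell_mult_Yobs)
  then show ?thesis by (simp add: Egt_def cexp_def cell_def add_divide_distrib)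
qed

lemma Egt_treatment_trend:
  "Egt M G T (Dtr v G T V) g True - Egt M G T (Dtr v G T V) g False
    = (if v g True \<le> v g False then 1 else -1)
      * measure M (crossing g True (v g False) (v g True)) / measure M (cell g True)"
  using measure_upper_shift[of g True "v g True" "v g False"]
  by (simp add: Egt_treatment measure_upper_time_invariant diff_divide_distrib[symmetric])

lemma treatment_trend_pos_imp_threshold_le:
  assumes "Egt M G T (Dtr v G T V) g False < Egt M G T (Dtr v G T V) g True"
  shows "v g True \<le> v g False"
proof (rule ccontr)
  assume "\<not> ?thesis"
  then have "Egt M G T (Dtr v G T V) g True - Egt M G T (Dtr v G T V) g False \<le> 0"
    unfolding Egt_treatment_trend by (simp add: measure_cell_pos less_imp_le)
  with assms show False by simp
qed

lemma Egt_outcome_trend: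
  assumes same_mean: "cexp M effect (upper g True (v g False)) = cexp M effect (upper g False (v g False))"
  shows "Egt M G T (Yobs v G T V Y0 Y1) g True - Egt M G T (Yobs v G T V Y0 Y1) g False
    = Egt M G T Y0 g True - Egt M G T Y0 g False
      + cexp M effect (crossing g True (v g False) (v g True))
        * (Egt M G T (Dtr v G T V) g True - Egt M G T (Dtr v G T V) g False)"
proof -
  let ?I = "\<lambda>c. LINT x:upper g True c|M. effect x"
  let ?X = "crossing g True (v g False) (v g True)"
  have shift: "?I (v g True) - ?I (v g False)
      = (if v g True \<le> v g False then 1 else -1) * measure M ?X * cexp M effect ?X"
    using set_integral_upper_shift[OF integrable_effect, of g True "v g True" "v g False"]
    by (simp add: set_integral_eq_cexp_mult[OF finite_measure_axioms integrable_effect])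
  have "Egt M G T (Yobs v G T V Y0 Y1) g True - Egt M G T (Yobs v G T V Y0 Y1) g False
      = Egt M G T Y0 g True - Egt M G T Y0 g False + (?I (v g True) - ?I (v g False)) / measure M (cell g True)"
    using set_integral_upper_time_invariant[OF integrable_effect same_mean]
    by (simp add: Egt_outcome diff_divide_distrib)
  then show ?thesis
    unfolding shift Egt_treatment_trend by simp
qed

lemma cprob_treated_cell: "cprob M (ev M (\<lambda>x. Dtr v G T V x = 1)) (cell g t) = Egt M G T (Dtr v G T V) g t"
proof -
  have "ev M (\<lambda>x. Dtr v G T V x = 1) \<inter> cell g t = upper g t (v g t)"
    by (auto simp: ev_def cell_def upper_def Dtr_def split: if_splits)
  then show ?thesis by (simp add: cprob_def Egt_treatment)
qed

end

theorem theorem1: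
  fixes M :: "'a measure"
    and Y0 Y1 V :: "'a \<Rightarrow> real"
    and G T :: "'a \<Rightarrow> bool"
    and v :: "bool \<Rightarrow> bool \<Rightarrow> real"
  assumes P: "prob_space M"
    and measG: "G \<in> measurable M (count_space UNIV)"
    and measT: "T \<in> measurable M (count_space UNIV)"
    and measV: "V \<in> borel_measurable M"
    and intY0: "integrable M Y0"
    and intY1: "integrable M Y1"
    and cells: "\<And>g t. measure M (ev M (\<lambda>x. G x = g \<and> T x = t)) > 0"
    \<comment> \<open>Assumption 1: V independent of T conditional on G\<close>
    and A1: "\<And>g t B. B \<in> sets borel \<Longrightarrow>
        measure M (ev M (\<lambda>x. V x \<in> B \<and> T x = t \<and> G x = g)) * measure M (ev M (\<lambda>x. G x = g))
        = measure M (ev M (\<lambda>x. V x \<in> B \<and> G x = g)) * measure M (ev M (\<lambda>x. T x = t \<and> G x = g))"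
    \<comment> \<open>Assumption 2\<close>
    and A2a: "Egt M G T (Dtr v G T V) True True > Egt M G T (Dtr v G T V) True False"
    and A2b: "Egt M G T (Dtr v G T V) True True - Egt M G T (Dtr v G T V) True False
              > Egt M G T (Dtr v G T V) False True - Egt M G T (Dtr v G T V) False False"
    \<comment> \<open>Assumption 3: common trends\<close>
    and A3: "Egt M G T Y0 True True - Egt M G T Y0 True False
             = Egt M G T Y0 False True - Egt M G T Y0 False False"
    \<comment> \<open>Assumption 4\<close>
    and A4: "\<And>g. cexp M (\<lambda>x. Y1 x - Y0 x) (ev M (\<lambda>x. G x = g \<and> T x \<and> Dpot v G V False x = 1))
               = cexp M (\<lambda>x. Y1 x - Y0 x) (ev M (\<lambda>x. G x = g \<and> \<not> T x \<and> Dpot v G V False x = 1))"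
  shows
    "(let D = Dtr v G T V;
          Y = Yobs v G T V Y0 Y1;
          W = DID M G T Y / DID M G T D;
          \<alpha> = (cprob M (ev M (\<lambda>x. D x = 1)) (ev M (\<lambda>x. G x \<and> T x))
               - cprob M (ev M (\<lambda>x. D x = 1)) (ev M (\<lambda>x. G x \<and> \<not> T x))) / DID M G T D;
          \<Delta> = cexp M (\<lambda>x. Y1 x - Y0 x)
                 (ev M (\<lambda>x. Dpot v G V False x < Dpot v G V True x \<and> G x \<and> T x));
          \<Delta>' = cexp M (\<lambda>x. Y1 x - Y0 x)
                 (ev M (\<lambda>x. Dpot v G V False x \<noteq> Dpot v G V True x \<and> \<not> G x \<and> T x))
      in W = \<alpha> * \<Delta> + (1 - \<alpha>) * \<Delta>'
         \<and> ((\<Delta> = \<Delta>' \<or> (0 < Egt M G T D False True \<and> Egt M G T D False True = Egt M G T D False False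
                         \<and> Egt M G T D False False < 1))
            \<longrightarrow> W = \<Delta>))"
proof -
  interpret fuzzy_did M Y0 Y1 V G T v
    using P measG measT measV intY0 intY1 cells A1 by (simp add: fuzzy_did_def fuzzy_did_axioms_def)
  let ?D = "Dtr v G T V" and ?Y = "Yobs v G T V Y0 Y1"
  define a where "a = Egt M G T ?D True True - Egt M G T ?D True False"
  define b where "b = Egt M G T ?D False True - Egt M G T ?D False False"
  define \<Delta> where "\<Delta> = cexp M effect (ev M (\<lambda>x. Dpot v G V False x < Dpot v G V True x \<and> G x \<and> T x))"
  define \<Delta>' where "\<Delta>' = cexp M effect (ev M (\<lambda>x. Dpot v G V False x \<noteq> Dpot v G V True x \<and> \<not> G x \<and> T x))"
  have "v True True \<le> v True False"
    using A2a by (intro treatment_trend_pos_imp_threshold_le) simp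
  then have \<Delta>_crossing: "\<Delta> = cexp M effect (crossing True True (v True False) (v True True))"
    unfolding \<Delta>_def crossing_def ev_def Dpot_def by (intro arg_cong[where f="cexp M effect"]) auto
  have \<Delta>'_crossing: "\<Delta>' = cexp M effect (crossing False True (v False False) (v False True))"
    unfolding \<Delta>'_def crossing_def ev_def Dpot_def by (intro arg_cong[where f="cexp M effect"]) auto
  have same_mean: "cexp M effect (upper g True (v g False)) = cexp M effect (upper g False (v g False))" for g
  proof -
    have "ev M (\<lambda>x. G x = g \<and> T x \<and> Dpot v G V False x = 1) = upper g True (v g False)"
      and "ev M (\<lambda>x. G x = g \<and> \<not> T x \<and> Dpot v G V False x = 1) = upper g False (v g False)"
      by (auto simp: ev_def upper_def Dpot_def)
    then show ?thesis using A4[of g] by simp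
  qed
  have DID_D: "DID M G T ?D = a - b"
    by (simp add: DID_def a_def b_def)
  have DID_Y: "DID M G T ?Y = \<Delta> * a - \<Delta>' * b"
    using Egt_outcome_trend[OF same_mean, of True] Egt_outcome_trend[OF same_mean, of False] A3
    by (simp add: DID_def a_def b_def \<Delta>_crossing \<Delta>'_crossing)
  have "ev M (\<lambda>x. G x \<and> T x) = cell True True" "ev M (\<lambda>x. G x \<and> \<not> T x) = cell True False"
    by (auto simp: ev_def cell_def)
  then have \<alpha>_numerator: "cprob M (ev M (\<lambda>x. ?D x = 1)) (ev M (\<lambda>x. G x \<and> T x))
      - cprob M (ev M (\<lambda>x. ?D x = 1)) (ev M (\<lambda>x. G x \<and> \<not> T x)) = a"
    by (simp add: cprob_treated_cell a_def)
  have "a - b \<noteq> 0"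
    using A2b by (simp add: a_def b_def)
  then have decomposition: "(\<Delta> * a - \<Delta>' * b) / (a - b) = a / (a - b) * \<Delta> + (1 - a / (a - b)) * \<Delta>'"
    and collapses_to_\<Delta>: "b = 0 \<or> \<Delta> = \<Delta>' \<Longrightarrow> (\<Delta> * a - \<Delta>' * b) / (a - b) = \<Delta>"
    by (simp_all add: divide_simps) (auto simp: algebra_simps)
  show ?thesis
    unfolding Let_def DID_D DID_Y \<alpha>_numerator \<Delta>_def[symmetric] \<Delta>'_def[symmetric]
    using decomposition collapses_to_\<Delta> by (auto simp: b_def)
qed

end
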